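(* If $g\in\mathcal{G}_0^0\cup\mathcal{G}_0^{sh}$, then for every finite measurable partition $\mathcal{P}$ the limit $\lim_{n\to\infty}\frac1nH(g,\mathcal{P}_n)$ exists and equals $h(g,\mathcal{P})$.
   Context: $\mathcal{G}_0$ is the set of concave functions $g:[0,1]\to\mathbb{R}$ with $g(0)=\lim_{x\to0^+}g(x)=0$. Let $\eta(x)=-x\log x$ and $\eta(0)=0$. Define $\mathcal{G}_0^0=\{g\in\mathcal{G}_0:\lim_{x\to0^+}g(x)/\eta(x)=0\}$ and $\mathcal{G}_0^{sh}=\{g\in\mathcal{G}_0:0<\lim_{x\to0^+}g(x)/\eta(x)<\infty\}$. $T$ is a measure-preserving map of a probability space $(X,\Sigma,\mu)$. For a finite measurable partition $\mathcal{P}$, let $\mathcal{P}_n=\bigvee_{i=0}^{n-1}T^{-i}\mathcal{P}$, $H(g,\mathcal{P})=\sum_{A\in\mathcal{P}}g(\mu(A))$, and $h(g,\mathcal{P})=\limsup_{n\to\infty}\frac1nH(g,\mathcal{P}_n)$. *)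

theory Defs
  imports "HOL-Probability.Probability"
begin

definition eta :: "real \<Rightarrow> real" where
  "eta x = (if x = 0 then 0 else - x * ln x)"

definition G0 :: "(real \<Rightarrow> real) set" where
  "G0 = {g. concave_on {0..1} g \<and> g 0 = 0 \<and> (g \<longlongrightarrow> 0) (at_right 0)}"

definition G0_zero :: "(real \<Rightarrow> real) set" where
  "G0_zero = {g \<in> G0. ((\<lambda>x. g x / eta x) \<longlongrightarrow> 0) (at_right 0)}"

definition G0_sh :: "(real \<Rightarrow> real) set" where
  "G0_sh = {g \<in> G0. \<exists>L::real. 0 < L \<and> ((\<lambda>x. g x / eta x) \<longlongrightarrow> L) (at_right 0)}"

definition measure_preserving_map :: "'a measure \<Rightarrow> ('a \<Rightarrow> 'a) \<Rightarrow> bool" where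
  "measure_preserving_map M T \<longleftrightarrow> T \<in> measurable M M \<and>
     (\<forall>A \<in> sets M. measure M (T -` A \<inter> space M) = measure M A)"

definition finite_meas_partition :: "'a measure \<Rightarrow> 'a set set \<Rightarrow> bool" where
  "finite_meas_partition M P \<longleftrightarrow> finite P \<and> P \<subseteq> sets M \<and> \<Union>P = space M \<and>
     disjoint P"

definition iter_join :: "'a measure \<Rightarrow> ('a \<Rightarrow> 'a) \<Rightarrow> 'a set set \<Rightarrow> nat \<Rightarrow> 'a set set" where
  "iter_join M T P n =
     {space M \<inter> (\<Inter>i<n. (T ^^ i) -` c i) | c. \<forall>i<n. c i \<in> P} - {{}}"

definition Hg :: "'a measure \<Rightarrow> (real \<Rightarrow> real) \<Rightarrow> 'a set set \<Rightarrow> real" where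
  "Hg M g P = (\<Sum>A\<in>P. g (measure M A))"

definition hg :: "'a measure \<Rightarrow> ('a \<Rightarrow> 'a) \<Rightarrow> (real \<Rightarrow> real) \<Rightarrow> 'a set set \<Rightarrow> ereal" where
  "hg M T g P = limsup (\<lambda>n. ereal (Hg M g (iter_join M T P n) / real n))"

end

theory Submission
  imports Defs
begin

text \<open>For the Shannon function \<open>eta\<close>, the cells of \<open>P\<^sub>m\<^sub>+\<^sub>n\<close> are the nonempty
  sets \<open>A \<inter> T\<^sup>-\<^sup>m B\<close> with \<open>A \<in> P\<^sub>m\<close>, \<open>B \<in> P\<^sub>n\<close>; by invariance of the measure
  their masses form a coupling of the distributions of \<open>P\<^sub>m\<close> and \<open>P\<^sub>n\<close>, so Gibbs'
  inequality makes \<open>n \<mapsto> H(eta, P\<^sub>n)\<close> subadditive and Fekete's lemma gives convergence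
  of \<open>H(eta, P\<^sub>n) / n\<close>. If \<open>g\<close> is concave with \<open>g / eta \<rightarrow> L\<close> at \<open>0\<close>, then
  \<open>|g - L eta| \<le> \<epsilon> eta + K\<^sub>\<epsilon> x\<close> on \<open>[0,1]\<close>; summing over \<open>P\<^sub>n\<close> (total mass \<open>1\<close>) gives
  \<open>H(g, P\<^sub>n) = L H(eta, P\<^sub>n) + O(\<epsilon> n + K\<^sub>\<epsilon>)\<close>, so \<open>H(g, P\<^sub>n) / n\<close> converges as well,
  and its limit is then also the limsup \<open>h(g, P)\<close>.\<close>

lemma eta_eq: "eta x = - x * ln x"
  by (simp add: eta_def)

lemma eta_nonneg: "0 \<le> x \<Longrightarrow> x \<le> 1 \<Longrightarrow> 0 \<le> eta x"
  by (cases "x = 0") (auto simp: eta_def mult_nonneg_nonpos)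

lemma eta_le_one:
  assumes "0 \<le> x"
  shows "eta x \<le> 1"
proof (cases "x = 0")
  case False
  with assms have x: "x > 0" by simp
  have "- ln x \<le> 1/x - 1"
    using ln_le_minus_one[of "1/x"] x by (simp add: ln_div)
  then have "x * (- ln x) \<le> x * (1/x - 1)"
    using x by (intro mult_left_mono) auto
  then show ?thesis using x by (simp add: eta_def algebra_simps)
qed (simp add: eta_def)

text \<open>This is \<open>ln t \<le> t - 1\<close> at \<open>t = a b / x\<close>.\<close>
lemma eta_le_cross_entropy_term:
  fixes x a b :: real
  assumes "0 \<le> x" "x \<le> a" "x \<le> b"
  shows "eta x \<le> x * (- ln a) + x * (- ln b) + a * b - x"
proof (cases "x = 0")
  case False
  with assms have x: "x > 0" and ab: "a > 0" "b > 0" by auto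
  have "x * ln (a*b/x) \<le> x * (a*b/x - 1)"
    using ln_le_minus_one[of "a*b/x"] x ab by (intro mult_left_mono) auto
  moreover have "ln (a*b/x) = ln a + ln b - ln x"
    using x ab by (simp add: ln_div ln_mult)
  ultimately show ?thesis using x by (simp add: eta_def algebra_simps)
qed (use assms in \<open>simp add: eta_def\<close>)

lemma sum_eta_coupling_le:
  fixes x :: "'i \<Rightarrow> 'k \<Rightarrow> real" and a :: "'i \<Rightarrow> real" and b :: "'k \<Rightarrow> real"
  assumes I: "finite I" and K: "finite K"
    and nonneg: "\<And>i k. i \<in> I \<Longrightarrow> k \<in> K \<Longrightarrow> 0 \<le> x i k"
    and marg_a: "\<And>i. i \<in> I \<Longrightarrow> (\<Sum>k\<in>K. x i k) = a i"
    and marg_b: "\<And>k. k \<in> K \<Longrightarrow> (\<Sum>i\<in>I. x i k) = b k"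
    and sum_a: "(\<Sum>i\<in>I. a i) = 1" and sum_b: "(\<Sum>k\<in>K. b k) = 1"
  shows "(\<Sum>i\<in>I. \<Sum>k\<in>K. eta (x i k)) \<le> (\<Sum>i\<in>I. eta (a i)) + (\<Sum>k\<in>K. eta (b k))"
proof -
  have le_marg: "x i k \<le> a i" "x i k \<le> b k" if "i \<in> I" "k \<in> K" for i k
    using member_le_sum[of k K "x i"] member_le_sum[of i I "\<lambda>i. x i k"]
      that nonneg marg_a marg_b I K by auto
  have "(\<Sum>i\<in>I. \<Sum>k\<in>K. eta (x i k)) \<le>
      (\<Sum>i\<in>I. \<Sum>k\<in>K. x i k * (- ln (a i)) + x i k * (- ln (b k)) + a i * b k - x i k)"
    by (intro sum_mono eta_le_cross_entropy_term) (auto simp: nonneg le_marg)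
  also have "\<dots> = (\<Sum>i\<in>I. (\<Sum>k\<in>K. x i k) * (- ln (a i)))
      + (\<Sum>k\<in>K. (\<Sum>i\<in>I. x i k) * (- ln (b k)))
      + (\<Sum>i\<in>I. a i) * (\<Sum>k\<in>K. b k) - (\<Sum>i\<in>I. \<Sum>k\<in>K. x i k)"
    by (simp add: sum.distrib sum_subtractf sum_distrib_right sum_distrib_left
        sum.swap[of _ I K] sum_negf)
  also have "\<dots> = (\<Sum>i\<in>I. eta (a i)) + (\<Sum>k\<in>K. eta (b k))"
    using marg_a marg_b sum_a sum_b by (simp add: eta_eq)
  finally show ?thesis .
qed

lemma subadditive_iterate_le:
  fixes a :: "nat \<Rightarrow> real"
  assumes sub: "\<And>m n. a (m + n) \<le> a m + a n"
  shows "a (q * m + r) \<le> real q * a m + a r"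
proof (induction q)
  case (Suc q)
  have "a (Suc q * m + r) \<le> a m + a (q * m + r)"
    using sub[of m "q * m + r"] by (simp add: add.assoc)
  then show ?case using Suc by (simp add: algebra_simps)
qed simp

lemma subadditive_quotient_le:
  fixes a :: "nat \<Rightarrow> real"
  assumes sub: "\<And>m n. a (m + n) \<le> a m + a n" and nonneg: "\<And>n. 0 \<le> a n"
    and m: "0 < m" and n: "0 < n"
  shows "a n / real n \<le> a m / real m + (\<Sum>j<m. a j) / real n"
proof -
  have "real (n div m) * real m \<le> real n"
    by (metis of_nat_le_iff of_nat_mult div_times_less_eq_dividend)
  then have "real (n div m) * a m \<le> real n / real m * a m"
    using m nonneg[of m] by (intro mult_right_mono) (auto simp: field_simps)
  moreover have "a (n mod m) \<le> (\<Sum>j<m. a j)"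
    using m nonneg by (intro member_le_sum) auto
  moreover have "a n \<le> real (n div m) * a m + a (n mod m)"
    using subadditive_iterate_le[OF sub, of "n div m" m "n mod m"] by simp
  ultimately have "a n \<le> real n * (a m / real m) + (\<Sum>j<m. a j)"
    by simp
  then show ?thesis using n by (simp add: field_simps)
qed

lemma subadditive_quotient_convergent:
  fixes a :: "nat \<Rightarrow> real"
  assumes sub: "\<And>m n. a (m + n) \<le> a m + a n" and nonneg: "\<And>n. 0 \<le> a n"
  shows "convergent (\<lambda>n. a n / real n)"
proof -
  define l where "l = (INF n\<in>{0<..}. a n / real n)"
  have bdd: "bdd_below ((\<lambda>n. a n / real n) ` {0<..})"
    using nonneg by (intro bdd_belowI[of _ 0]) auto
  have l_le: "l \<le> a n / real n" if "0 < n" for n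
    unfolding l_def using that bdd by (intro cINF_lower) auto
  have "(\<lambda>n. a n / real n) \<longlonglongrightarrow> l"
  proof (rule order_tendstoI)
    fix u assume "u < l"
    from eventually_gt_at_top[of 0] show "\<forall>\<^sub>F n in sequentially. u < a n / real n"
      by eventually_elim (use \<open>u < l\<close> l_le in \<open>meson less_le_trans\<close>)
  next
    fix u assume "l < u"
    then obtain m where m: "0 < m" "a m / real m < u"
      using cINF_less_iff[OF _ bdd, of u] unfolding l_def by auto
    have "\<forall>\<^sub>F n in sequentially. (\<Sum>j<m. a j) / real n < u - a m / real m"
      using m(2) by (intro order_tendstoD(2)[OF lim_const_over_n]) simp
    with eventually_gt_at_top[of 0] show "\<forall>\<^sub>F n in sequentially. a n / real n < u"
    proof eventually_elim
      case (elim n)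
      then show ?case using subadditive_quotient_le[OF sub nonneg m(1) elim(1)] by linarith
    qed
  qed
  then show ?thesis by (auto simp: convergent_def)
qed

lemma quotient_tendsto_zero_if_dominated:
  fixes d s :: "nat \<Rightarrow> real"
  assumes dom: "\<And>e. e > 0 \<Longrightarrow> \<exists>K. \<forall>n. \<bar>d n\<bar> \<le> e * s n + K"
    and bounded: "Bseq (\<lambda>n. s n / real n)"
  shows "(\<lambda>n. d n / real n) \<longlonglongrightarrow> 0"
proof (rule tendsto_iff[THEN iffD2], intro allI impI)
  fix r :: real assume r: "r > 0"
  obtain C where C: "C > 0" "\<And>n. \<bar>s n / real n\<bar> \<le> C"
    using bounded by (auto simp: Bseq_def)
  define e where "e = r / (2 * C)"
  have e: "e > 0" "e * C = r / 2" using r C by (auto simp: e_def)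
  obtain K where K: "\<And>n. \<bar>d n\<bar> \<le> e * s n + K" using dom[OF e(1)] by blast
  have "\<forall>\<^sub>F n in sequentially. K / real n < r / 2"
    using r by (intro order_tendstoD(2)[OF lim_const_over_n]) simp
  with eventually_gt_at_top[of 0]
  show "\<forall>\<^sub>F n in sequentially. dist (d n / real n) 0 < r"
  proof eventually_elim
    case (elim n)
    have "\<bar>d n / real n\<bar> \<le> e * (s n / real n) + K / real n"
      using K[of n] elim(1) by (simp add: abs_div field_simps)
    also have "e * (s n / real n) \<le> e * C"
      using abs_le_D1[OF C(2)[of n]] e(1) by (intro mult_left_mono) auto
    finally have "\<bar>d n / real n\<bar> < r" using e(2) elim(2) by linarith
    then show ?case by simp
  qed
qed

lemma concave_zero_ge_chord:
  assumes "concave_on {0..1} g" "g 0 = 0" "0 \<le> x" "x \<le> 1"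
  shows "x * g 1 \<le> g x"
  using concave_onD[OF assms(1), of x 0 1] assms(2-4) by simp

lemma concave_zero_le_slope_bound:
  assumes conc: "concave_on {0..1} g" and g0: "g 0 = 0" and d: "0 < d" "d \<le> x" "x \<le> 1"
  shows "g x \<le> \<bar>g d\<bar> / d"
proof -
  have x: "x > 0" using d by simp
  have "(d/x) * g x \<le> g d"
    using concave_onD[OF conc, of "d/x" 0 x] d x g0 by simp
  then have "g x \<le> (x/d) * g d"
    using x d by (simp add: field_simps)
  also have "\<dots> \<le> (x/d) * \<bar>g d\<bar>" using x d by (intro mult_left_mono) auto
  also have "\<dots> \<le> \<bar>g d\<bar> / d" using d by (simp add: field_simps mult_left_le_one_le)
  finally show ?thesis .
qed

lemma concave_eta_diff_bounded:
  assumes conc: "concave_on {0..1} g" and g0: "g 0 = 0" and L: "0 \<le> L"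
    and d: "0 < d" "d \<le> x" "x \<le> 1"
  shows "\<bar>g x - L * eta x\<bar> \<le> \<bar>g 1\<bar> + \<bar>g d\<bar> / d + L"
proof -
  have "x * g 1 \<le> g x" using concave_zero_ge_chord[OF conc g0] d by simp
  moreover have "\<bar>x * g 1\<bar> \<le> \<bar>g 1\<bar>" using d by (simp add: abs_mult mult_left_le_one_le)
  moreover have "g x \<le> \<bar>g d\<bar> / d" using concave_zero_le_slope_bound[OF conc g0 d] .
  moreover have "0 \<le> L * eta x" "L * eta x \<le> L"
    using L eta_nonneg[of x] eta_le_one[of x] d by (auto simp: mult_left_le)
  moreover have "0 \<le> \<bar>g d\<bar> / d" using d by simp
  ultimately show ?thesis by (simp add: abs_le_iff)
qed

text \<open>Near \<open>0\<close> the error is controlled by the limit of \<open>g / eta\<close>; away from \<open>0\<close>,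
  where \<open>eta\<close> may vanish, it is bounded and absorbed into the term linear in \<open>x\<close>.\<close>
lemma concave_eta_ratio_approx:
  assumes conc: "concave_on {0..1} g" and g0: "g 0 = 0" and L: "0 \<le> L"
    and lim: "((\<lambda>x. g x / eta x) \<longlongrightarrow> L) (at_right 0)" and e: "e > 0"
  shows "\<exists>K. \<forall>x\<in>{0..1}. \<bar>g x - L * eta x\<bar> \<le> e * eta x + K * x"
proof -
  obtain b where b: "b > 0" "\<And>y. 0 < y \<Longrightarrow> y < b \<Longrightarrow> dist (g y / eta y) L < e"
    using tendstoD[OF lim e] unfolding eventually_at_right_field by auto
  define d where "d = min b 1"
  have d: "0 < d" "d \<le> 1" "d \<le> b" using b by (auto simp: d_def)
  define K where "K = (\<bar>g 1\<bar> + \<bar>g d\<bar> / d + L) / d"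
  have K: "K \<ge> 0" using d L by (simp add: K_def)
  have "\<bar>g x - L * eta x\<bar> \<le> e * eta x + K * x" if x: "0 \<le> x" "x \<le> 1" for x
  proof (cases "x < d")
    case True
    show ?thesis
    proof (cases "x = 0")
      case False
      with x have x_pos: "x > 0" by simp
      then have eta_pos: "eta x > 0"
        using True d by (simp add: eta_def mult_pos_neg)
      have "\<bar>g x / eta x - L\<bar> < e"
        using b(2)[OF x_pos] True d by (simp add: dist_real_def)
      then have "\<bar>g x - L * eta x\<bar> < e * eta x"
        using eta_pos by (simp add: abs_less_iff field_simps)
      then show ?thesis using K x by (simp add: add_increasing2)
    qed (simp add: g0 eta_def)
  next
    case False
    then have "\<bar>g x - L * eta x\<bar> \<le> K * d"
      using concave_eta_diff_bounded[OF conc g0 L d(1) _ x(2)] d by (simp add: K_def)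
    also have "\<dots> \<le> K * x" using False K by (intro mult_left_mono) auto
    finally show ?thesis using e eta_nonneg[OF x] by (simp add: add_increasing)
  qed
  then show ?thesis by (intro exI[of _ K]) auto
qed

lemma (in finite_measure) sum_measure_Int_disjoint_cover:
  assumes "finite I" "disjoint_family_on F I" "\<And>i. i \<in> I \<Longrightarrow> F i \<in> sets M"
    and "A \<in> sets M" "A \<subseteq> (\<Union>i\<in>I. F i)"
  shows "(\<Sum>i\<in>I. measure M (A \<inter> F i)) = measure M A"
proof -
  have "measure M (\<Union>i\<in>I. A \<inter> F i) = (\<Sum>i\<in>I. measure M (A \<inter> F i))"
    using assms(1-4) by (intro finite_measure_finite_Union) (auto simp: disjoint_family_on_def)
  moreover have "(\<Union>i\<in>I. A \<inter> F i) = A" using assms(5) by blast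
  ultimately show ?thesis by simp
qed

lemma (in finite_measure) sum_measure_Int_partition:
  assumes Q: "finite_meas_partition M Q" and A: "A \<in> sets M"
  shows "(\<Sum>B\<in>Q. measure M (A \<inter> B)) = measure M A"
  using Q A sets.sets_into_space[OF A]
  by (intro sum_measure_Int_disjoint_cover)
    (auto simp: finite_meas_partition_def disjoint_def disjoint_family_on_def)

definition cell :: "'a measure \<Rightarrow> ('a \<Rightarrow> 'a) \<Rightarrow> (nat \<Rightarrow> 'a set) \<Rightarrow> nat \<Rightarrow> 'a set" where
  "cell M T c n = space M \<inter> (\<Inter>i<n. (T ^^ i) -` c i)"

lemma iter_join_eq_cells: "iter_join M T P n = {cell M T c n | c. \<forall>i<n. c i \<in> P} - {{}}"
  unfolding iter_join_def cell_def by simp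

lemma cell_cong: "(\<And>i. i < n \<Longrightarrow> c i = c' i) \<Longrightarrow> cell M T c n = cell M T c' n"
  unfolding cell_def by auto

lemma cell_subset_space: "cell M T c n \<subseteq> space M"
  unfolding cell_def by blast

lemma funpow_apply_funpow: "(f ^^ i) ((f ^^ m) x) = (f ^^ (m + i)) x"
  by (metis add.commute comp_apply funpow_add)

lemma cell_Suc: "cell M T c (Suc n) = cell M T c n \<inter> (T ^^ n) -` c n"
  unfolding cell_def by (auto simp: lessThan_Suc)

locale mpt_partition = prob_space M for M :: "'a measure" +
  fixes T :: "'a \<Rightarrow> 'a" and P :: "'a set set"
  assumes measure_preserving: "measure_preserving_map M T"
    and partition: "finite_meas_partition M P"
begin

abbreviation Pn :: "nat \<Rightarrow> 'a set set" where
  "Pn n \<equiv> iter_join M T P n"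

lemma T_measurable: "T \<in> M \<rightarrow>\<^sub>M M"
  using measure_preserving by (simp add: measure_preserving_map_def)

lemma funpow_measurable: "T ^^ i \<in> M \<rightarrow>\<^sub>M M"
proof (induction i)
  case (Suc i)
  then show ?case using measurable_comp[OF Suc T_measurable] by (simp add: comp_def)
qed simp

lemma funpow_space: "x \<in> space M \<Longrightarrow> (T ^^ i) x \<in> space M"
  using measurable_space[OF funpow_measurable] .

lemma funpow_vimage_sets: "A \<in> sets M \<Longrightarrow> (T ^^ i) -` A \<inter> space M \<in> sets M"
  using funpow_measurable by (rule measurable_sets)

lemma funpow_measure_preserving:
  "A \<in> sets M \<Longrightarrow> measure M ((T ^^ i) -` A \<inter> space M) = measure M A"
proof (induction i arbitrary: A)
  case 0
  then show ?case using sets.sets_into_space by (simp add: Int_absorb2)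
next
  case (Suc i)
  have T_vimage: "T -` A \<inter> space M \<in> sets M"
    using T_measurable Suc.prems by (rule measurable_sets)
  have "(T ^^ Suc i) -` A \<inter> space M = (T ^^ i) -` (T -` A \<inter> space M) \<inter> space M"
    using funpow_space by auto
  then have "measure M ((T ^^ Suc i) -` A \<inter> space M) = measure M (T -` A \<inter> space M)"
    using Suc.IH[OF T_vimage] by simp
  also have "\<dots> = measure M A"
    using measure_preserving Suc.prems by (simp add: measure_preserving_map_def)
  finally show ?case .
qed

lemma cell_sets: "(\<And>i. i < n \<Longrightarrow> c i \<in> sets M) \<Longrightarrow> cell M T c n \<in> sets M"
proof (induction n)
  case (Suc n)
  have "cell M T c (Suc n) = cell M T c n \<inter> ((T ^^ n) -` c n \<inter> space M)"
    using cell_subset_space[of M T c n] by (auto simp: cell_Suc)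
  then show ?case using Suc by (auto intro!: sets.Int funpow_vimage_sets)
qed (simp add: cell_def)

lemma cell_add:
  "cell M T c (m + n) = cell M T c m \<inter> (T ^^ m) -` cell M T (\<lambda>i. c (m + i)) n"
proof (intro set_eqI iffI)
  fix x assume "x \<in> cell M T c (m + n)"
  then show "x \<in> cell M T c m \<inter> (T ^^ m) -` cell M T (\<lambda>i. c (m + i)) n"
    by (auto simp: cell_def funpow_space funpow_apply_funpow)
next
  fix x assume x: "x \<in> cell M T c m \<inter> (T ^^ m) -` cell M T (\<lambda>i. c (m + i)) n"
  have "(T ^^ i) x \<in> c i" if "i < m + n" for i
  proof (cases "i < m")
    case False
    then obtain j where "i = m + j" "j < n" using \<open>i < m + n\<close> by (metis add_less_cancel_left le_Suc_ex not_less)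
    then show ?thesis using x by (auto simp: cell_def funpow_apply_funpow)
  qed (use x in \<open>auto simp: cell_def\<close>)
  then show "x \<in> cell M T c (m + n)" using x by (auto simp: cell_def)
qed

lemma Pn_sets: "A \<in> Pn n \<Longrightarrow> A \<in> sets M"
  using partition cell_sets
  by (auto simp: iter_join_eq_cells finite_meas_partition_def)

lemma Pn_subset_space: "A \<in> Pn n \<Longrightarrow> A \<subseteq> space M"
  by (rule sets.sets_into_space[OF Pn_sets])

lemma Pn_finite: "finite (Pn n)"
proof -
  have "Pn n \<subseteq> (\<lambda>c. cell M T c n) ` (\<Pi>\<^sub>E i\<in>{..<n}. P)"
  proof
    fix A assume "A \<in> Pn n"
    then obtain c where A: "A = cell M T c n" "\<forall>i<n. c i \<in> P"
      unfolding iter_join_eq_cells by blast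
    then have "A = cell M T (restrict c {..<n}) n"
      using cell_cong[of n c "restrict c {..<n}"] by simp
    moreover have "restrict c {..<n} \<in> (\<Pi>\<^sub>E i\<in>{..<n}. P)" using A by auto
    ultimately show "A \<in> (\<lambda>c. cell M T c n) ` (\<Pi>\<^sub>E i\<in>{..<n}. P)" by blast
  qed
  moreover have "finite (\<Pi>\<^sub>E i\<in>{..<n}. P)"
    using partition by (intro finite_PiE) (auto simp: finite_meas_partition_def)
  ultimately show ?thesis by (meson finite_imageI finite_subset)
qed

lemma Pn_disjoint: "disjoint (Pn n)"
proof (rule disjointI)
  fix A B assume A: "A \<in> Pn n" and B: "B \<in> Pn n" and "A \<noteq> B"
  obtain c where c: "A = cell M T c n" "\<forall>i<n. c i \<in> P"
    using A unfolding iter_join_eq_cells by blast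
  obtain c' where c': "B = cell M T c' n" "\<forall>i<n. c' i \<in> P"
    using B unfolding iter_join_eq_cells by blast
  show "A \<inter> B = {}"
  proof (rule ccontr)
    assume "A \<inter> B \<noteq> {}"
    then obtain x where x: "x \<in> A" "x \<in> B" by blast
    have "c i = c' i" if "i < n" for i
    proof -
      have "(T ^^ i) x \<in> c i \<inter> c' i" using x c c' that by (auto simp: cell_def)
      moreover have "disjoint P" using partition by (simp add: finite_meas_partition_def)
      ultimately show ?thesis using c(2) c'(2) that disjointD[of P "c i" "c' i"] by blast
    qed
    then have "A = B" using c(1) c'(1) cell_cong[of n c c'] by simp
    with \<open>A \<noteq> B\<close> show False by contradiction
  qed
qed

lemma Pn_cover: "\<Union>(Pn n) = space M"
proof
  show "\<Union>(Pn n) \<subseteq> space M"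
    using Pn_subset_space by blast
  show "space M \<subseteq> \<Union>(Pn n)"
  proof
    fix x assume x: "x \<in> space M"
    have "\<forall>i. \<exists>p. p \<in> P \<and> (T ^^ i) x \<in> p"
      using funpow_space[OF x] partition by (auto simp: finite_meas_partition_def)
    from choice[OF this] obtain c where c: "\<And>i. c i \<in> P" "\<And>i. (T ^^ i) x \<in> c i"
      by blast
    then have "x \<in> cell M T c n" using x by (simp add: cell_def)
    moreover have "cell M T c n \<in> Pn n"
      unfolding iter_join_eq_cells using c(1) \<open>x \<in> cell M T c n\<close> by blast
    ultimately show "x \<in> \<Union>(Pn n)" by blast
  qed
qed

lemma Pn_partition: "finite_meas_partition M (Pn n)"
  using Pn_finite Pn_sets Pn_cover Pn_disjoint by (auto simp: finite_meas_partition_def)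

lemma Pn_add_subset: "Pn (m + n) \<subseteq> (\<lambda>(A, B). A \<inter> (T ^^ m) -` B) ` (Pn m \<times> Pn n)"
proof
  fix C assume "C \<in> Pn (m + n)"
  then obtain c where C: "C = cell M T c (m + n)" "\<forall>i<m+n. c i \<in> P" "C \<noteq> {}"
    unfolding iter_join_eq_cells by blast
  define A where "A = cell M T c m"
  define B where "B = cell M T (\<lambda>i. c (m + i)) n"
  have C_eq: "C = A \<inter> (T ^^ m) -` B" using C(1) cell_add by (simp add: A_def B_def)
  have "\<forall>i<m. c i \<in> P" "\<forall>i<n. c (m + i) \<in> P" using C(2) by auto
  moreover have "A \<noteq> {}" "B \<noteq> {}" using C(3) C_eq by auto
  ultimately have "A \<in> Pn m" "B \<in> Pn n"
    unfolding iter_join_eq_cells A_def B_def by blast+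
  then show "C \<in> (\<lambda>(A, B). A \<inter> (T ^^ m) -` B) ` (Pn m \<times> Pn n)" using C_eq by blast
qed

lemma sum_Pn_measure: "(\<Sum>A\<in>Pn n. measure M A) = 1"
  using sum_measure_Int_partition[OF Pn_partition sets.top] Pn_subset_space
  by (simp add: Int_absorb1 prob_space)

lemma sum_measure_Int_vimage_left:
  assumes B: "B \<in> Pn n"
  shows "(\<Sum>A\<in>Pn m. measure M (A \<inter> (T ^^ m) -` B)) = measure M B"
proof -
  have "A \<inter> (T ^^ m) -` B = ((T ^^ m) -` B \<inter> space M) \<inter> A" if "A \<in> Pn m" for A
    using Pn_subset_space[OF that] by blast
  then show ?thesis
    using sum_measure_Int_partition[OF Pn_partition funpow_vimage_sets[OF Pn_sets[OF B]]]
      funpow_measure_preserving[OF Pn_sets[OF B]] by simp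
qed

lemma sum_measure_Int_vimage_right:
  assumes A: "A \<in> Pn m"
  shows "(\<Sum>B\<in>Pn n. measure M (A \<inter> (T ^^ m) -` B)) = measure M A"
proof -
  have "(\<Sum>B\<in>Pn n. measure M (A \<inter> ((T ^^ m) -` B \<inter> space M))) = measure M A"
  proof (rule sum_measure_Int_disjoint_cover)
    show "disjoint_family_on (\<lambda>B. (T ^^ m) -` B \<inter> space M) (Pn n)"
      unfolding disjoint_family_on_def
    proof (intro ballI impI)
      fix B B' assume "B \<in> Pn n" "B' \<in> Pn n" "B \<noteq> B'"
      then have "B \<inter> B' = {}" by (rule disjointD[OF Pn_disjoint])
      then show "((T ^^ m) -` B \<inter> space M) \<inter> ((T ^^ m) -` B' \<inter> space M) = {}" by blast
    qed
    show "A \<subseteq> (\<Union>B\<in>Pn n. (T ^^ m) -` B \<inter> space M)"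
    proof
      fix x assume "x \<in> A"
      then have x: "x \<in> space M" using Pn_subset_space[OF A] by blast
      then have "(T ^^ m) x \<in> \<Union>(Pn n)" by (simp add: Pn_cover funpow_space)
      then show "x \<in> (\<Union>B\<in>Pn n. (T ^^ m) -` B \<inter> space M)" using x by blast
    qed
  qed (auto simp: Pn_finite Pn_sets Pn_sets[OF A] funpow_vimage_sets)
  moreover have "A \<inter> ((T ^^ m) -` B \<inter> space M) = A \<inter> (T ^^ m) -` B" for B
    using Pn_subset_space[OF A] by blast
  ultimately show ?thesis by simp
qed

lemma Hg_eta_nonneg: "0 \<le> Hg M eta (Pn n)"
  unfolding Hg_def by (intro sum_nonneg eta_nonneg) auto

lemma Hg_eta_add_le: "Hg M eta (Pn (m + n)) \<le> Hg M eta (Pn m) + Hg M eta (Pn n)"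
proof -
  let ?f = "\<lambda>(A, B). A \<inter> (T ^^ m) -` B"
  have "Hg M eta (Pn (m + n)) \<le> (\<Sum>C\<in>?f ` (Pn m \<times> Pn n). eta (measure M C))"
    unfolding Hg_def using Pn_add_subset Pn_finite
    by (intro sum_mono2 finite_imageI eta_nonneg) auto
  also have "\<dots> \<le> (\<Sum>p\<in>Pn m \<times> Pn n. eta (measure M (?f p)))"
    using Pn_finite by (intro sum_image_le[unfolded o_def] eta_nonneg) auto
  also have "\<dots> = (\<Sum>A\<in>Pn m. \<Sum>B\<in>Pn n. eta (measure M (A \<inter> (T ^^ m) -` B)))"
    by (simp add: sum.cartesian_product split_beta)
  also have "\<dots> \<le> Hg M eta (Pn m) + Hg M eta (Pn n)"
    unfolding Hg_def using Pn_finite sum_Pn_measure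
    by (intro sum_eta_coupling_le sum_measure_Int_vimage_left sum_measure_Int_vimage_right) auto
  finally show ?thesis .
qed

lemma Hg_eta_quotient_convergent: "convergent (\<lambda>n. Hg M eta (Pn n) / real n)"
proof (rule subadditive_quotient_convergent)
  show "Hg M eta (Pn (m + n)) \<le> Hg M eta (Pn m) + Hg M eta (Pn n)" for m n
    by (rule Hg_eta_add_le)
  show "0 \<le> Hg M eta (Pn n)" for n
    by (rule Hg_eta_nonneg)
qed

lemma Hg_Pn_approx:
  assumes "\<forall>x\<in>{0..1}. \<bar>g x - L * eta x\<bar> \<le> e * eta x + K * x"
  shows "\<bar>Hg M g (Pn n) - L * Hg M eta (Pn n)\<bar> \<le> e * Hg M eta (Pn n) + K"
proof -
  have "\<bar>Hg M g (Pn n) - L * Hg M eta (Pn n)\<bar>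
      \<le> (\<Sum>A\<in>Pn n. \<bar>g (measure M A) - L * eta (measure M A)\<bar>)"
    unfolding Hg_def by (simp add: sum_distrib_left flip: sum_subtractf)
  also have "\<dots> \<le> (\<Sum>A\<in>Pn n. e * eta (measure M A) + K * measure M A)"
    using assms by (intro sum_mono) auto
  also have "\<dots> = e * Hg M eta (Pn n) + K"
    by (simp add: Hg_def sum.distrib sum_Pn_measure flip: sum_distrib_left)
  finally show ?thesis .
qed

lemma Hg_quotient_tendsto:
  assumes approx: "\<And>e. e > 0 \<Longrightarrow> \<exists>K. \<forall>x\<in>{0..1}. \<bar>g x - L * eta x\<bar> \<le> e * eta x + K * x"
    and l: "(\<lambda>n. Hg M eta (Pn n) / real n) \<longlonglongrightarrow> l"
  shows "(\<lambda>n. Hg M g (Pn n) / real n) \<longlonglongrightarrow> L * l"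
proof -
  define D where "D n = Hg M g (Pn n) - L * Hg M eta (Pn n)" for n
  have "(\<lambda>n. D n / real n) \<longlonglongrightarrow> 0"
  proof (rule quotient_tendsto_zero_if_dominated)
    show "\<exists>K. \<forall>n. \<bar>D n\<bar> \<le> e * Hg M eta (Pn n) + K" if "e > 0" for e
      using approx[OF that] Hg_Pn_approx unfolding D_def by blast
    show "Bseq (\<lambda>n. Hg M eta (Pn n) / real n)"
      using l by (rule convergent_imp_Bseq[OF convergentI])
  qed
  then have "(\<lambda>n. L * (Hg M eta (Pn n) / real n) + D n / real n) \<longlonglongrightarrow> L * l + 0"
    by (intro tendsto_add tendsto_mult_left l)
  then show ?thesis by (simp add: D_def diff_divide_distrib)
qed

end

theorem mainTheorem6:
  fixes M :: "'a measure" and T :: "'a \<Rightarrow> 'a" and g :: "real \<Rightarrow> real"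
    and P :: "'a set set"
  assumes "prob_space M"
    and "measure_preserving_map M T"
    and "g \<in> G0_zero \<union> G0_sh"
    and "finite_meas_partition M P"
  shows "(\<lambda>n. ereal (Hg M g (iter_join M T P n) / real n)) \<longlonglongrightarrow> hg M T g P"
proof -
  interpret mpt_partition M T P
    using assms by (simp add: mpt_partition_def mpt_partition_axioms_def)
  obtain L where L: "0 \<le> L" "((\<lambda>x. g x / eta x) \<longlongrightarrow> L) (at_right 0)"
    and conc: "concave_on {0..1} g" and g0: "g 0 = 0"
    using assms(3) unfolding G0_zero_def G0_sh_def G0_def by (auto intro: less_imp_le)
  obtain l where l: "(\<lambda>n. Hg M eta (Pn n) / real n) \<longlonglongrightarrow> l"
    using Hg_eta_quotient_convergent by (auto simp: convergent_def)
  have "(\<lambda>n. Hg M g (Pn n) / real n) \<longlonglongrightarrow> L * l"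
    using concave_eta_ratio_approx[OF conc g0 L] l by (rule Hg_quotient_tendsto)
  then have lim: "(\<lambda>n. ereal (Hg M g (Pn n) / real n)) \<longlonglongrightarrow> ereal (L * l)"
    by (rule tendsto_ereal)
  moreover have "hg M T g P = ereal (L * l)"
    unfolding hg_def by (rule lim_imp_Limsup[OF trivial_limit_sequentially lim])
  ultimately show ?thesis by simp
qed

end
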